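(* Let $\mathcal{H}$ be a finite-dimensional Hilbert space and let $\mathcal{A}$ be a deterministic map sending every unitary $U$ on $\mathcal{H}$ to an operator $\mathcal{A}(U)$ with $\|\mathcal{A}(U)\|_\infty=1$, which is $K$-Lipschitz in the sense that $\|\mathcal{A}(U_1)-\mathcal{A}(U_2)\|_\infty\le K\|U_1-U_2\|_\infty$ for all unitaries $U_1,U_2$. Let $|\psi\rangle,|\varphi\rangle\in\mathcal{H}$ be fixed unit vectors. Then the function $$F(U):=F\big(U|\psi\rangle,\mathcal{A}(U)|\varphi\rangle\big)=\big|\langle\psi|U^\dagger\mathcal{A}(U)|\varphi\rangle\big|^2$$ is $(2+2K)$-Lipschitz in $U$: $|F(U_1)-F(U_2)|\le(2+2K)\|U_1-U_2\|_2$ for all unitaries $U_1,U_2$, where $\|X\|_2=\sqrt{\mathrm{tr}X^\dagger X}$.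
   Context: $\|\cdot\|_\infty$ denotes the operator norm. In this part of the paper, operators output by the map are taken to be exactly norm-preserving, i.e. $\|\mathcal{A}(U)\|_\infty=1$. *)

theory Defs
  imports "HOL-Analysis.Analysis"
begin

text \<open>Finite-dimensional Hilbert space H = complex^'n (standard inner product);
operators on H are complex 'n x 'n matrices.\<close>

definition adjoint_mat :: "complex^'n^'n \<Rightarrow> complex^'n^'n" where
  "adjoint_mat A = (\<chi> i j. cnj (A $ j $ i))"

definition unitary_mat :: "complex^'n^'n \<Rightarrow> bool" where
  "unitary_mat U \<longleftrightarrow> adjoint_mat U ** U = mat 1 \<and> U ** adjoint_mat U = mat 1"

definition op_norm :: "complex^'n^'n \<Rightarrow> real" where
  "op_norm A = onorm (\<lambda>x. A *v x)"

definition trace_mat :: "complex^'n^'n \<Rightarrow> complex" where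
  "trace_mat A = (\<Sum>i\<in>UNIV. A $ i $ i)"

definition hs_norm :: "complex^'n^'n \<Rightarrow> real" where
  "hs_norm X = sqrt (Re (trace_mat (adjoint_mat X ** X)))"

definition braket :: "complex^'n \<Rightarrow> complex^'n \<Rightarrow> complex" where
  "braket x y = (\<Sum>i\<in>UNIV. cnj (x $ i) * y $ i)"

definition pure_fidelity :: "complex^'n \<Rightarrow> complex^'n \<Rightarrow> real" where
  "pure_fidelity x y = (cmod (braket x y))\<^sup>2"

end

theory Submission imports Defs begin

text \<open>Write \<open>a(U) = \<langle>U\<psi>|\<A>(U)\<phi>\<rangle>\<close>, so that the fidelity is \<open>|a(U)|\<^sup>2\<close>.
Telescoping, \<open>a(U\<^sub>1) - a(U\<^sub>2) = \<langle>(U\<^sub>1 - U\<^sub>2)\<psi>|\<A>(U\<^sub>1)\<phi>\<rangle> + \<langle>U\<^sub>2\<psi>|(\<A>(U\<^sub>1) - \<A>(U\<^sub>2))\<phi>\<rangle>\<close>,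
and Cauchy-Schwarz bounds the two terms by \<open>\<parallel>U\<^sub>1 - U\<^sub>2\<parallel>\<^sub>\<infinity>\<close> and \<open>K \<parallel>U\<^sub>1 - U\<^sub>2\<parallel>\<^sub>\<infinity>\<close>.
Since \<open>|a(U)| \<le> 1\<close>, squaring costs at most a factor \<open>2\<close>, and the operator norm is
dominated by the Hilbert-Schmidt norm.\<close>

lemma norm_vec_square: "(norm (x::complex^'n))\<^sup>2 = (\<Sum>i\<in>UNIV. (cmod (x$i))\<^sup>2)"
  unfolding norm_vec_def L2_set_def by (simp add: sum_nonneg)

lemma cnj_mult_self: "cnj z * z = of_real ((cmod z)\<^sup>2)"
  by (metis complex_norm_square mult.commute)

lemma braket_self: "braket x x = of_real ((norm (x::complex^'n))\<^sup>2)"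
  unfolding norm_vec_square braket_def of_real_sum
  by (rule sum.cong) (simp_all only: cnj_mult_self)

lemma norm_braket_le: "cmod (braket x y) \<le> norm (x::complex^'n) * norm y"
proof -
  have "cmod (braket x y) \<le> (\<Sum>i\<in>UNIV. \<bar>cmod (x $ i)\<bar> * \<bar>cmod (y $ i)\<bar>)"
    unfolding braket_def by (rule order_trans[OF norm_sum]) (simp add: norm_mult)
  also have "\<dots> \<le> L2_set (\<lambda>i. cmod (x $ i)) UNIV * L2_set (\<lambda>i. cmod (y $ i)) UNIV"
    by (rule L2_set_mult_ineq)
  finally show ?thesis by (simp add: norm_vec_def)
qed

lemma braket_matrix_vector_mult_left:
  "braket (A *v x) y = braket x (adjoint_mat A *v (y::complex^'n))"
proof -
  have "(\<Sum>i\<in>UNIV. cnj (\<Sum>j\<in>UNIV. A $ i $ j * x $ j) * y $ i)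
      = (\<Sum>i\<in>UNIV. \<Sum>j\<in>UNIV. cnj (x $ j) * (cnj (A $ i $ j) * y $ i))"
    by (simp add: sum_distrib_left sum_distrib_right mult_ac)
  also have "\<dots> = (\<Sum>j\<in>UNIV. cnj (x $ j) * (\<Sum>i\<in>UNIV. cnj (A $ i $ j) * y $ i))"
    by (subst sum.swap) (simp add: sum_distrib_left)
  finally show ?thesis unfolding braket_def adjoint_mat_def matrix_vector_mult_def by simp
qed

lemma braket_diff_left: "braket (x - y) z = braket x z - braket y z"
  unfolding braket_def by (simp add: sum_subtractf algebra_simps)

lemma braket_diff_right: "braket z (x - y) = braket z x - braket z y"
  unfolding braket_def by (simp add: sum_subtractf algebra_simps)

lemma unitary_mat_norm_preserving:
  assumes "unitary_mat U" shows "norm (U *v x) = norm (x::complex^'n)"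
proof -
  have "braket (U *v x) (U *v x) = braket x x"
    using assms unfolding unitary_mat_def
    by (simp add: braket_matrix_vector_mult_left matrix_vector_mul_assoc)
  then have "(norm (U *v x))\<^sup>2 = (norm x)\<^sup>2"
    by (simp only: braket_self of_real_eq_iff)
  then show ?thesis by (simp add: power2_eq_iff_nonneg)
qed

lemma norm_matrix_vector_le_op_norm: "norm (A *v x) \<le> op_norm A * norm (x::complex^'n)"
  unfolding op_norm_def by (rule onorm) simp

lemma op_norm_nonneg: "0 \<le> op_norm (A::complex^'n^'n)"
  unfolding op_norm_def by (rule onorm_pos_le) simp

lemma op_norm_eq_0_iff: "op_norm (A::complex^'n^'n) = 0 \<longleftrightarrow> A = 0"
  unfolding op_norm_def by (simp add: onorm_eq_0 matrix_eq)

lemma op_norm_unitary_le: "unitary_mat U \<Longrightarrow> op_norm (U::complex^'n^'n) \<le> 1"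
  unfolding op_norm_def by (rule onorm_bound) (simp_all add: unitary_mat_norm_preserving)

lemma norm_braket_matrix_vector_le:
  "cmod (braket (A *v x) (B *v y)) \<le> op_norm A * op_norm B * norm x * norm (y::complex^'n)"
proof -
  have "cmod (braket (A *v x) (B *v y)) \<le> norm (A *v x) * norm (B *v y)"
    by (rule norm_braket_le)
  also have "\<dots> \<le> (op_norm A * norm x) * (op_norm B * norm y)"
    by (intro mult_mono norm_matrix_vector_le_op_norm) (simp_all add: op_norm_nonneg)
  finally show ?thesis by (simp add: mult_ac)
qed

lemma norm_braket_matrix_vector_diff_le:
  fixes U1 U2 A1 A2 :: "complex^'n^'n"
  shows "cmod (braket (U1 *v x) (A1 *v y) - braket (U2 *v x) (A2 *v y))
    \<le> (op_norm (U1 - U2) * op_norm A1 + op_norm U2 * op_norm (A1 - A2)) * norm x * norm y"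
proof -
  have "cmod (braket (U1 *v x) (A1 *v y) - braket (U2 *v x) (A2 *v y))
      = cmod (braket ((U1 - U2) *v x) (A1 *v y) + braket (U2 *v x) ((A1 - A2) *v y))"
    by (simp add: matrix_vector_mult_diff_rdistrib braket_diff_left braket_diff_right)
  also have "\<dots> \<le> cmod (braket ((U1 - U2) *v x) (A1 *v y)) + cmod (braket (U2 *v x) ((A1 - A2) *v y))"
    by (rule norm_triangle_ineq)
  also have "\<dots> \<le> op_norm (U1 - U2) * op_norm A1 * norm x * norm y + op_norm U2 * op_norm (A1 - A2) * norm x * norm y"
    by (intro add_mono norm_braket_matrix_vector_le)
  finally show ?thesis by (simp add: algebra_simps)
qed

lemma Re_trace_adjoint_mult_self:
  "Re (trace_mat (adjoint_mat A ** A)) = (\<Sum>i\<in>UNIV. \<Sum>j\<in>UNIV. (cmod (A$i$j))\<^sup>2)"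
proof -
  have "Re (trace_mat (adjoint_mat A ** A)) = (\<Sum>j\<in>UNIV. \<Sum>i\<in>UNIV. Re (cnj (A$i$j) * A$i$j))"
    unfolding trace_mat_def adjoint_mat_def matrix_matrix_mult_def by (simp add: Re_sum)
  also have "\<dots> = (\<Sum>i\<in>UNIV. \<Sum>j\<in>UNIV. (cmod (A$i$j))\<^sup>2)"
    by (subst sum.swap) (simp only: cnj_mult_self Re_complex_of_real)
  finally show ?thesis .
qed

lemma hs_norm_square: "(hs_norm A)\<^sup>2 = (\<Sum>i\<in>UNIV. \<Sum>j\<in>UNIV. (cmod (A$i$j))\<^sup>2)"
  unfolding hs_norm_def Re_trace_adjoint_mult_self by (simp add: sum_nonneg)

lemma hs_norm_nonneg: "0 \<le> hs_norm A"
  unfolding hs_norm_def Re_trace_adjoint_mult_self by (simp add: sum_nonneg)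

lemma norm_row_product_square_le:
  "(cmod (\<Sum>j\<in>UNIV. A$i$j * x$j))\<^sup>2 \<le> (\<Sum>j\<in>UNIV. (cmod (A$i$j))\<^sup>2) * (norm (x::complex^'n))\<^sup>2"
proof -
  have "cmod (\<Sum>j\<in>UNIV. A$i$j * x$j) \<le> (\<Sum>j\<in>UNIV. \<bar>cmod (A$i$j)\<bar> * \<bar>cmod (x$j)\<bar>)"
    by (rule order_trans[OF norm_sum]) (simp add: norm_mult)
  also have "\<dots> \<le> L2_set (\<lambda>j. cmod (A$i$j)) UNIV * L2_set (\<lambda>j. cmod (x $ j)) UNIV"
    by (rule L2_set_mult_ineq)
  finally have "(cmod (\<Sum>j\<in>UNIV. A$i$j * x$j))\<^sup>2
      \<le> (L2_set (\<lambda>j. cmod (A$i$j)) UNIV * L2_set (\<lambda>j. cmod (x $ j)) UNIV)\<^sup>2"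
    by (rule power_mono) simp
  then show ?thesis by (simp add: power_mult_distrib L2_set_def sum_nonneg norm_vec_def)
qed

lemma op_norm_le_hs_norm: "op_norm (A::complex^'n^'n) \<le> hs_norm A"
  unfolding op_norm_def
proof (rule onorm_bound[OF hs_norm_nonneg])
  fix x :: "complex^'n"
  have "(norm (A *v x))\<^sup>2 = (\<Sum>i\<in>UNIV. (cmod (\<Sum>j\<in>UNIV. A$i$j * x$j))\<^sup>2)"
    by (simp add: norm_vec_square matrix_vector_mult_def)
  also have "\<dots> \<le> (\<Sum>i\<in>UNIV. (\<Sum>j\<in>UNIV. (cmod (A$i$j))\<^sup>2) * (norm x)\<^sup>2)"
    by (intro sum_mono norm_row_product_square_le)
  also have "\<dots> = (hs_norm A * norm x)\<^sup>2"
    by (simp add: hs_norm_square power_mult_distrib sum_distrib_right)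
  finally show "norm (A *v x) \<le> hs_norm A * norm x"
    by (rule power2_le_imp_le) (simp add: hs_norm_nonneg)
qed

lemma abs_cmod_square_diff_le:
  assumes "cmod a \<le> 1" and "cmod b \<le> 1"
  shows "\<bar>(cmod a)\<^sup>2 - (cmod b)\<^sup>2\<bar> \<le> 2 * cmod (a - b)"
proof -
  have "(cmod a)\<^sup>2 - (cmod b)\<^sup>2 = (cmod a - cmod b) * (cmod a + cmod b)"
    by (simp add: power2_eq_square algebra_simps)
  then have "\<bar>(cmod a)\<^sup>2 - (cmod b)\<^sup>2\<bar> = \<bar>cmod a - cmod b\<bar> * (cmod a + cmod b)"
    by (simp add: abs_mult)
  also have "\<dots> \<le> cmod (a - b) * 2"
    using assms norm_triangle_ineq3[of a b] by (intro mult_mono) auto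
  finally show ?thesis by simp
qed

theorem lemma2:
  fixes \<A> :: "complex^'n^'n \<Rightarrow> complex^'n^'n"
    and K :: real
    and \<psi> \<phi> :: "complex^'n"
  assumes norm_one: "\<And>U. unitary_mat U \<Longrightarrow> op_norm (\<A> U) = 1"
    and lipschitz: "\<And>U1 U2. unitary_mat U1 \<Longrightarrow> unitary_mat U2 \<Longrightarrow>
        op_norm (\<A> U1 - \<A> U2) \<le> K * op_norm (U1 - U2)"
    and psi_unit: "norm \<psi> = 1"
    and phi_unit: "norm \<phi> = 1"
    and U1: "unitary_mat U1" and U2: "unitary_mat U2"
  shows "\<bar>pure_fidelity (U1 *v \<psi>) (\<A> U1 *v \<phi>) - pure_fidelity (U2 *v \<psi>) (\<A> U2 *v \<phi>)\<bar>
           \<le> (2 + 2 * K) * hs_norm (U1 - U2)"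
proof -
  define a where "a U = braket (U *v \<psi>) (\<A> U *v \<phi>)" for U
  define d where "d = op_norm (U1 - U2)"
  have amplitude_le_1: "cmod (a U) \<le> 1" if "unitary_mat U" for U
    using norm_braket_matrix_vector_le[of U \<psi> "\<A> U" \<phi>] op_norm_unitary_le[OF that]
      norm_one[OF that] psi_unit phi_unit
    by (simp add: a_def)
  have "cmod (a U1 - a U2) \<le> d * op_norm (\<A> U1) + op_norm U2 * op_norm (\<A> U1 - \<A> U2)"
    using norm_braket_matrix_vector_diff_le[of U1 \<psi> "\<A> U1" \<phi> U2 "\<A> U2"] psi_unit phi_unit
    by (simp add: a_def d_def)
  also have "\<dots> \<le> d + K * d"
    using norm_one[OF U1] lipschitz[OF U1 U2]
      mult_left_le_one_le[OF op_norm_nonneg op_norm_nonneg op_norm_unitary_le[OF U2],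
        of "\<A> U1 - \<A> U2"]
    by (simp add: d_def)
  finally have "\<bar>(cmod (a U1))\<^sup>2 - (cmod (a U2))\<^sup>2\<bar> \<le> (2 + 2 * K) * d"
    using abs_cmod_square_diff_le[OF amplitude_le_1[OF U1] amplitude_le_1[OF U2]] by argo
  moreover have "(2 + 2 * K) * d \<le> (2 + 2 * K) * hs_norm (U1 - U2)"
  proof (cases "K \<ge> -1")
    case True
    then show ?thesis by (simp add: d_def op_norm_le_hs_norm mult_left_mono)
  next
    case False
    \<comment> \<open>A negative Lipschitz constant forces \<open>U\<^sub>1 = U\<^sub>2\<close>.\<close>
    have "0 \<le> K * d"
      using lipschitz[OF U1 U2] op_norm_nonneg[of "\<A> U1 - \<A> U2"] by (simp add: d_def)
    with False have "d = 0"
      using op_norm_nonneg[of "U1 - U2"] by (simp add: d_def zero_le_mult_iff)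
    moreover from \<open>d = 0\<close> have "U1 - U2 = 0"
      by (simp add: d_def op_norm_eq_0_iff)
    ultimately show ?thesis using hs_norm_square[of "U1 - U2"] by simp
  qed
  ultimately show ?thesis by (simp add: pure_fidelity_def a_def)
qed

end
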